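(* For integers $k\geq l\geq 0$ and $n\geq 0$, let $q^*_n(k,l)$ be the number of ways to write the vector $(k,l)$ as an unordered sum of $n$ vectors (a vector partition into $n$ parts) each lying in $\{(0,0),(1,0),(0,1),(1,1)\}$, where each of $(0,0)$ and $(1,1)$ is used at most once while $(1,0)$ and $(0,1)$ may be used any number of times. Then $$\{S_{(k,l)'}\}_n=\begin{cases}q^*_n(k,l)-q^*_n(k+1,l-1)&\text{if } l>0,\\ q^*_n(k,l)&\text{if } l=0.\end{cases}$$
   Context: For $i\geq1$, $X_i(\sigma)$ is the number of $i$-cycles of $\sigma$. For a partition $\alpha=1^{a_1}2^{a_2}\cdots$ let $\binom X\alpha=\prod_i\binom{X_i}{a_i}$, $|\alpha|=\sum ia_i$, $l(\alpha)=\sum a_i$. For $m\geq0$ let $E_m=\sum_{\alpha\vdash m}(-1)^{|\alpha|-l(\alpha)}\binom X\alpha$ (so $E_0=1$), and set $E_m=0$ for $m<0$. Define $S_{(k,l)'}=E_kE_l-E_{k+1}E_{l-1}$ (the character polynomial of $W_{(k,l)'}(\mathbb C^n)$, $(k,l)'$ the conjugate partition). The signed moment of $p\in\mathbb C[X_1,X_2,\dotsc]$ is $\{p\}_n=\frac1{n!}\sum_{\sigma\in S_n}\mathrm{sgn}(\sigma)p(X_1(\sigma),X_2(\sigma),\dotsc)$. *)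

theory Defs
  imports Complex_Main "HOL-Combinatorics.Combinatorics" "HOL-Library.Multiset"
begin

definition cycle_count :: "nat \<Rightarrow> (nat \<Rightarrow> nat) \<Rightarrow> nat \<Rightarrow> nat" where
  "cycle_count n \<sigma> i = card {orbit \<sigma> x | x. x \<in> {1..n} \<and> card (orbit \<sigma> x) = i}"

text \<open>Partitions alpha = 1^a1 2^a2 ... of m, encoded by multiplicity functions a
  supported on {1..m} with sum i*a_i = m.\<close>
definition partitions_mult :: "nat \<Rightarrow> (nat \<Rightarrow> nat) set" where
  "partitions_mult m = {a. (\<forall>i. a i \<noteq> 0 \<longrightarrow> 1 \<le> i \<and> i \<le> m) \<and> (\<Sum>i=1..m. i * a i) = m}"

text \<open>E_m evaluated at cycle counts X (X i = X_i); E_m = 0 for m < 0.\<close>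
definition E_poly :: "int \<Rightarrow> (nat \<Rightarrow> nat) \<Rightarrow> int" where
  "E_poly m X = (if m < 0 then 0 else
     (\<Sum>a\<in>partitions_mult (nat m).
        (-1) ^ (nat m - (\<Sum>i=1..nat m. a i)) * (\<Prod>i=1..nat m. int (X i choose a i))))"

definition S_conj :: "nat \<Rightarrow> nat \<Rightarrow> (nat \<Rightarrow> nat) \<Rightarrow> int" where
  "S_conj k l X = E_poly (int k) X * E_poly (int l) X
                 - E_poly (int k + 1) X * E_poly (int l - 1) X"

definition signed_moment :: "nat \<Rightarrow> ((nat \<Rightarrow> nat) \<Rightarrow> int) \<Rightarrow> real" where
  "signed_moment n p = (1 / fact n) *
     (\<Sum>\<sigma>\<in>{\<sigma>. \<sigma> permutes {1..n}}. real_of_int (sign \<sigma> * p (cycle_count n \<sigma>)))"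

definition qstar :: "nat \<Rightarrow> nat \<Rightarrow> nat \<Rightarrow> nat" where
  "qstar n k l = card {M :: (nat \<times> nat) multiset.
      set_mset M \<subseteq> {(0,0),(1,0),(0,1),(1,1)} \<and> size M = n \<and>
      count M (0,0) \<le> 1 \<and> count M (1,1) \<le> 1 \<and>
      sum_mset (image_mset fst M) = k \<and> sum_mset (image_mset snd M) = l}"

end

theory Submission
  imports Defs "HOL-Library.Disjoint_Sets"
begin

(*
  At the cycle counts of a permutation p of S, E_m is the trace of p on the m-th exterior power of
  the permutation module: the sum, over the p-invariant m-subsets A of S, of the sign of p
  restricted to A. Invariant sets are unions of cycles, and grouping sets of cycles by their cycle
  type gives the defining sum of E_m.

  Hence n! times the signed moment of E_a E_b is a sum over pairs (A, B) of an a-subset and a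
  b-subset of S = {1..n}, of the sum over the permutations p stabilizing both sets of
  sgn p sgn(p|A) sgn(p|B) = sgn(p|A \<inter> B) sgn(p|S - (A \<union> B)). If one of these two regions contains
  two points, composing with their transposition is a sign-reversing involution; otherwise the
  stabilizer is Sym(A - B) \<times> Sym(B - A) and every summand is 1. Summing |A - B|! |B - A|! over the
  surviving pairs gives n! q*_n(a, b), the at most one point of A \<inter> B and of S - (A \<union> B) playing
  the roles of the parts (1,1) and (0,0).
*)

section \<open>Signs of permutations on invariant sets\<close>

lemma sign_cycle_of_list:
  "distinct cs \<Longrightarrow> sign (cycle_of_list cs) = (-1) ^ (length cs - 1)"
proof (induction cs rule: cycle_of_list.induct)
  case (1 i j cs)
  have "sign (cycle_of_list (i # j # cs)) = sign (transpose i j) * sign (cycle_of_list (j # cs))"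
    by (simp add: sign_compose permutation_swap_id permutation_of_cycle)
  also have "\<dots> = - ((-1) ^ (length (j # cs) - 1))"
    using 1 by (simp add: sign_swap_id)
  finally show ?case by (simp del: cycle_of_list.simps)
qed simp_all

definition sign_on :: "('a \<Rightarrow> 'a) \<Rightarrow> 'a set \<Rightarrow> int" where
  "sign_on p A = sign (perm_restrict p A)"

lemma perm_restrict_permutes:
  assumes "inj p" "p ` A = A"
  shows "perm_restrict p A permutes A"
proof (rule bij_imp_permutes)
  have "bij_betw p A A"
    using assms by (metis bij_betw_def inj_on_subset subset_UNIV)
  then show "bij_betw (perm_restrict p A) A A"
    by (rule bij_betw_cong[THEN iffD1, rotated]) (simp add: perm_restrict_simps)
qed (simp add: perm_restrict_simps)

lemma sign_on_Un:
  assumes "inj p" "finite A" "finite B" "A \<inter> B = {}" "p ` A = A" "p ` B = B"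
  shows "sign_on p (A \<union> B) = sign_on p A * sign_on p B"
proof -
  have pA: "perm_restrict p A permutes A" and pB: "perm_restrict p B permutes B"
    using assms perm_restrict_permutes by blast+
  then have "perm_restrict p (A \<union> B) = perm_restrict p A \<circ> perm_restrict p B"
    using perm_restrict_union assms(4) by metis
  moreover have "permutation (perm_restrict p A)" "permutation (perm_restrict p B)"
    using pA pB assms(2,3) permutation_permutes by blast+
  ultimately show ?thesis
    unfolding sign_on_def by (simp add: sign_compose)
qed

lemma sign_on_orbit:
  assumes "permutation p"
  shows "sign_on p (orbit p s) = (-1) ^ (card (orbit p s) - 1)"
proof -
  have set_support: "set (support p s) = orbit p s"
    using support_set[OF assms] orbit_altdef_permutation[OF assms] by auto
  have "perm_restrict p (orbit p s) = cycle_of_list (support p s)"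
  proof
    fix x
    show "perm_restrict p (orbit p s) x = cycle_of_list (support p s) x"
      using cycle_restrict[OF assms, of x s] id_outside_supp[of x "support p s"] set_support
      by (cases "x \<in> orbit p s") (simp_all add: perm_restrict_simps)
  qed
  moreover have "distinct (support p s)"
    using cycle_of_permutation[OF assms] .
  ultimately show ?thesis
    unfolding sign_on_def using sign_cycle_of_list set_support by (metis distinct_card)
qed

lemma orbit_subset_invariant:
  assumes "p ` A = A" "x \<in> A"
  shows "orbit p x \<subseteq> A"
proof
  fix y assume "y \<in> orbit p x"
  then show "y \<in> A" by induct (use assms in auto)
qed

lemma orbit_invariant:
  assumes "permutation p"
  shows "p ` orbit p x = orbit p x"
proof
  show "p ` orbit p x \<subseteq> orbit p x"
    by (auto intro: orbit.step)
  show "orbit p x \<subseteq> p ` orbit p x"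
  proof
    fix y assume "y \<in> orbit p x"
    then show "y \<in> p ` orbit p x"
      by cases (use permutation_self_in_orbit[OF assms] in auto)
  qed
qed

lemma orbit_eq_of_mem:
  assumes "permutation p" "y \<in> orbit p x"
  shows "orbit p y = orbit p x"
  using orbit_cyclic_eq3[OF cyclic_on_orbit'[OF assms(1)] assms(2)] .

definition orbits :: "('a \<Rightarrow> 'a) \<Rightarrow> 'a set \<Rightarrow> 'a set set" where
  "orbits p A = (\<lambda>x. orbit p x) ` A"

lemma card_orbits_Diff_orbit:
  assumes "permutation p" "finite A" "p ` A = A" "s \<in> A"
  shows "card (orbits p A) = card (orbits p (A - orbit p s)) + 1"
proof -
  have "orbits p A = insert (orbit p s) (orbits p (A - orbit p s))"
    using assms(4) orbit_eq_of_mem[OF assms(1)] by (auto simp: orbits_def)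
  moreover have "orbit p s \<notin> orbits p (A - orbit p s)"
    using permutation_self_in_orbit[OF assms(1)] by (auto simp: orbits_def)
  ultimately show ?thesis
    using assms(2) by (simp add: orbits_def)
qed

lemma sign_on_eq_orbits:
  assumes "permutation p" "finite A" "p ` A = A"
  shows "sign_on p A = (-1) ^ (card A - card (orbits p A))"
  using assms(2,3)
proof (induction A rule: finite_psubset_induct)
  case (psubset A)
  show ?case
  proof (cases "A = {}")
    case True
    have "perm_restrict p {} = id"
      by (auto simp: perm_restrict_def)
    then show ?thesis
      using True by (simp add: sign_on_def orbits_def)
  next
    case False
    then obtain s where s: "s \<in> A"
      by auto
    define c where "c = orbit p s"
    have "s \<in> c" "c \<subseteq> A" "p ` c = c"
      unfolding c_def using permutation_self_in_orbit[OF assms(1)] orbit_subset_invariant[OF psubset.prems s]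
        orbit_invariant[OF assms(1)] by simp_all
    have inj: "inj p"
      using assms(1) permutation_bijective bij_is_inj by blast
    have "p ` (A - c) = A - c"
      using \<open>p ` c = c\<close> psubset.prems inj by (simp add: image_set_diff)
    then have "sign_on p A = sign_on p (A - c) * sign_on p c"
      using sign_on_Un[OF inj, of "A - c" c] \<open>c \<subseteq> A\<close> \<open>p ` c = c\<close> psubset.hyps
      by (metis Diff_disjoint Diff_partition Int_commute Un_commute finite_Diff finite_subset)
    moreover have "sign_on p (A - c) = (-1) ^ (card (A - c) - card (orbits p (A - c)))"
      using psubset.IH[of "A - c"] \<open>s \<in> c\<close> s \<open>p ` (A - c) = A - c\<close> by blast
    moreover have "sign_on p c = (-1) ^ (card c - 1)"
      unfolding c_def by (rule sign_on_orbit[OF assms(1)])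
    moreover have "card (orbits p A) = card (orbits p (A - c)) + 1"
      unfolding c_def using card_orbits_Diff_orbit[OF assms(1) psubset.hyps psubset.prems s] .
    moreover have "card (orbits p (A - c)) \<le> card (A - c)"
      unfolding orbits_def using psubset.hyps by (simp add: card_image_le)
    moreover have "card A = card (A - c) + card c" "card c \<ge> 1"
      using \<open>c \<subseteq> A\<close> \<open>s \<in> c\<close> psubset.hyps finite_subset[OF \<open>c \<subseteq> A\<close>]
      by (auto simp: card_Diff_subset card_mono Suc_le_eq card_gt_0_iff)
    ultimately show ?thesis
      by (simp add: power_add[symmetric])
  qed
qed

section \<open>Exterior traces as sums over sets of cycles\<close>

lemma Union_orbits:
  assumes "permutation p" "p ` A = A"
  shows "\<Union>(orbits p A) = A"
  unfolding orbits_def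
  using orbit_subset_invariant[OF assms(2)] permutation_self_in_orbit[OF assms(1)] by blast

lemma orbits_Union:
  assumes "permutation p" "T \<subseteq> orbits p S"
  shows "orbits p (\<Union>T) = T"
proof
  show "orbits p (\<Union>T) \<subseteq> T"
  proof
    fix c assume "c \<in> orbits p (\<Union>T)"
    then obtain y d where "c = orbit p y" "y \<in> d" "d \<in> T"
      unfolding orbits_def by blast
    moreover obtain x where "d = orbit p x"
      using assms(2) \<open>d \<in> T\<close> unfolding orbits_def by blast
    ultimately show "c \<in> T"
      using orbit_eq_of_mem[OF assms(1)] by simp
  qed
  show "T \<subseteq> orbits p (\<Union>T)"
  proof
    fix c assume "c \<in> T"
    then obtain x where "c = orbit p x"
      using assms(2) unfolding orbits_def by blast
    then show "c \<in> orbits p (\<Union>T)"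
      using \<open>c \<in> T\<close> permutation_self_in_orbit[OF assms(1), of x] unfolding orbits_def by blast
  qed
qed

lemma invariant_Union_orbits:
  assumes "permutation p" "T \<subseteq> orbits p S"
  shows "p ` \<Union>T = \<Union>T"
proof -
  have "p ` c = c" if "c \<in> T" for c
  proof -
    obtain x where "c = orbit p x"
      using assms(2) \<open>c \<in> T\<close> by (auto simp: orbits_def)
    then show ?thesis
      using orbit_invariant[OF assms(1)] by simp
  qed
  then show ?thesis
    by (simp add: image_Union)
qed

lemma card_Union_orbits:
  assumes "permutation p" "T \<subseteq> orbits p S"
  shows "card (\<Union>T) = (\<Sum>c\<in>T. card c)"
proof (rule card_Union_disjoint)
  show "pairwise disjnt T"
    unfolding pairwise_def disjnt_def
  proof (intro ballI impI)
    fix c d assume "c \<in> T" "d \<in> T" "c \<noteq> d"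
    obtain x y where "c = orbit p x" "d = orbit p y"
      using assms(2) \<open>c \<in> T\<close> \<open>d \<in> T\<close> unfolding orbits_def by blast
    then show "c \<inter> d = {}"
      using orbit_eq_of_mem[OF assms(1)] \<open>c \<noteq> d\<close> by blast
  qed
  show "finite c" if "c \<in> T" for c
    using assms that finite_orbit[OF permutation_self_in_orbit[OF assms(1)]]
    by (auto simp: orbits_def)
qed

(* The trace of p on the m-th exterior power of the permutation module with basis S. *)
definition exterior_trace :: "'a set \<Rightarrow> ('a \<Rightarrow> 'a) \<Rightarrow> nat \<Rightarrow> int" where
  "exterior_trace S p m = (\<Sum>A | A \<subseteq> S \<and> p ` A = A \<and> card A = m. sign_on p A)"

lemma exterior_trace_eq_sum_orbit_sets:
  assumes "finite S" "p permutes S"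
  shows "exterior_trace S p m = (\<Sum>T | T \<subseteq> orbits p S \<and> (\<Sum>c\<in>T. card c) = m. (-1) ^ (m - card T))"
  unfolding exterior_trace_def
proof (rule sum.reindex_bij_witness[where i = Union and j = "orbits p"])
  have p: "permutation p"
    using assms permutation_permutes by blast
  have pS: "p ` S = S"
    using assms(2) permutes_image by blast
  fix T assume T: "T \<in> {T. T \<subseteq> orbits p S \<and> (\<Sum>c\<in>T. card c) = m}"
  show "orbits p (\<Union>T) = T"
    using orbits_Union[OF p] T by blast
  have "\<Union>T \<subseteq> S"
    using T Union_orbits[OF p pS] by blast
  then show "\<Union>T \<in> {A. A \<subseteq> S \<and> p ` A = A \<and> card A = m}"
    using T invariant_Union_orbits[OF p, of T S] card_Union_orbits[OF p, of T S] by simp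
next
  have p: "permutation p"
    using assms permutation_permutes by blast
  fix A assume A: "A \<in> {A. A \<subseteq> S \<and> p ` A = A \<and> card A = m}"
  show "\<Union>(orbits p A) = A"
    using A Union_orbits[OF p] by blast
  have "orbits p A \<subseteq> orbits p S"
    using A by (auto simp: orbits_def)
  moreover have "(\<Sum>c\<in>orbits p A. card c) = m"
    using A Union_orbits[OF p] card_Union_orbits[OF p \<open>orbits p A \<subseteq> orbits p S\<close>] by simp
  ultimately show "orbits p A \<in> {T. T \<subseteq> orbits p S \<and> (\<Sum>c\<in>T. card c) = m}"
    by simp
  have "finite A"
    using A assms(1) finite_subset by blast
  then show "(-1) ^ (m - card (orbits p A)) = sign_on p A"
    using A sign_on_eq_orbits[OF p \<open>finite A\<close>] by simp
qed

section \<open>Grouping sets by their weight type\<close>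

definition weight_type :: "('c \<Rightarrow> nat) \<Rightarrow> 'c set \<Rightarrow> nat \<Rightarrow> nat" where
  "weight_type w T i = card {c\<in>T. w c = i}"

lemma weight_type_eq_0_iff:
  assumes "finite T"
  shows "weight_type w T i = 0 \<longleftrightarrow> i \<notin> w ` T"
  using assms by (auto simp: weight_type_def)

lemma bij_betw_weight_type_slices:
  assumes Ob: "finite Ob" and a: "\<And>i. a i \<noteq> 0 \<Longrightarrow> i \<in> I"
  shows "bij_betw (\<lambda>T. restrict (\<lambda>i. {c\<in>T. w c = i}) I) {T. T \<subseteq> Ob \<and> weight_type w T = a}
    (\<Pi>\<^sub>E i\<in>I. {U. U \<subseteq> {c\<in>Ob. w c = i} \<and> card U = a i})"
proof (rule bij_betw_byWitness[where f' = "\<lambda>F. \<Union>i\<in>I. F i"])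
  let ?A = "{T. T \<subseteq> Ob \<and> weight_type w T = a}"
  let ?B = "\<Pi>\<^sub>E i\<in>I. {U. U \<subseteq> {c\<in>Ob. w c = i} \<and> card U = a i}"
  have "w c \<in> I" if "T \<in> ?A" "c \<in> T" for T c
    using that weight_type_eq_0_iff[OF finite_subset[OF _ Ob], of T w "w c"] a by auto
  then show "\<forall>T\<in>?A. (\<Union>i\<in>I. restrict (\<lambda>i. {c\<in>T. w c = i}) I i) = T"
    by auto
  have slices: "{c \<in> (\<Union>j\<in>I. F j). w c = i} = (if i \<in> I then F i else {})" if "F \<in> ?B" for F i
  proof -
    have "\<And>j. j \<in> I \<Longrightarrow> F j \<subseteq> {c\<in>Ob. w c = j}"
      using PiE_mem[OF that] by blast
    then show ?thesis
      by auto
  qed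
  show "\<forall>F\<in>?B. restrict (\<lambda>i. {c \<in> \<Union>j\<in>I. F j. w c = i}) I = F"
  proof
    fix F assume F: "F \<in> ?B"
    show "restrict (\<lambda>i. {c \<in> \<Union>j\<in>I. F j. w c = i}) I = F"
    proof
      fix i
      show "restrict (\<lambda>i. {c \<in> \<Union>j\<in>I. F j. w c = i}) I i = F i"
        using slices[OF F, of i] PiE_arb[OF F, of i] by (cases "i \<in> I") simp_all
    qed
  qed
  show "(\<lambda>T. restrict (\<lambda>i. {c\<in>T. w c = i}) I) ` ?A \<subseteq> ?B"
    by (auto simp: weight_type_def)
  show "(\<lambda>F. \<Union>i\<in>I. F i) ` ?B \<subseteq> ?A"
  proof clarify
    fix F assume F: "F \<in> ?B"
    have "weight_type w (\<Union>i\<in>I. F i) i = a i" for i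
      using slices[OF F, of i] a[of i] PiE_mem[OF F, of i] by (auto simp: weight_type_def)
    then show "(\<Union>i\<in>I. F i) \<subseteq> Ob \<and> weight_type w (\<Union>i\<in>I. F i) = a"
      using F by (auto dest: PiE_mem)
  qed
qed

lemma card_subsets_with_weight_type:
  assumes "finite Ob" "finite I" "\<And>i. a i \<noteq> 0 \<Longrightarrow> i \<in> I"
  shows "card {T. T \<subseteq> Ob \<and> weight_type w T = a} = (\<Prod>i\<in>I. card {c\<in>Ob. w c = i} choose a i)"
  using bij_betw_same_card[OF bij_betw_weight_type_slices[OF assms(1,3)]] assms(1,2)
  by (simp add: card_PiE n_subsets)

lemma sum_eq_sum_weight_type:
  assumes "finite T" "finite I" "w ` T \<subseteq> I"
  shows "sum w T = (\<Sum>i\<in>I. i * weight_type w T i)"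
    and "card T = (\<Sum>i\<in>I. weight_type w T i)"
proof -
  have "sum w T = (\<Sum>i\<in>I. sum w {c\<in>T. w c = i})"
    by (rule sum.group[OF assms, symmetric])
  also have "\<dots> = (\<Sum>i\<in>I. sum (\<lambda>_. i) {c\<in>T. w c = i})"
    by (intro sum.cong refl) simp
  finally show "sum w T = (\<Sum>i\<in>I. i * weight_type w T i)"
    by (simp add: weight_type_def mult.commute)
  show "card T = (\<Sum>i\<in>I. weight_type w T i)"
    unfolding weight_type_def using sum.group[OF assms, of "\<lambda>_. 1::nat"] by (simp only: card_eq_sum)
qed

lemma weight_type_in_partitions_mult_iff:
  assumes "finite T"
  shows "weight_type w T \<in> partitions_mult m \<longleftrightarrow> w ` T \<subseteq> {1..m} \<and> (\<Sum>i=1..m. i * weight_type w T i) = m"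
proof -
  have "(\<forall>i. weight_type w T i \<noteq> 0 \<longrightarrow> 1 \<le> i \<and> i \<le> m) \<longleftrightarrow> w ` T \<subseteq> {1..m}"
    using weight_type_eq_0_iff[OF assms, of w] by auto
  then show ?thesis
    unfolding partitions_mult_def by simp
qed

lemma weight_type_in_partitions_mult_iff_sum:
  assumes "finite T" and pos: "\<And>c. c \<in> T \<Longrightarrow> w c \<ge> 1"
  shows "weight_type w T \<in> partitions_mult m \<longleftrightarrow> sum w T = m"
proof
  assume "weight_type w T \<in> partitions_mult m"
  then show "sum w T = m"
    using sum_eq_sum_weight_type(1)[OF assms(1) finite_atLeastAtMost]
      weight_type_in_partitions_mult_iff[OF assms(1)] by metis
next
  assume m: "sum w T = m"
  have "w c \<le> m" if "c \<in> T" for c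
    using member_le_sum[OF that _ assms(1), of w] m by simp
  then have "w ` T \<subseteq> {1..m}"
    using pos by fastforce
  then show "weight_type w T \<in> partitions_mult m"
    using sum_eq_sum_weight_type(1)[OF assms(1) finite_atLeastAtMost] m
      weight_type_in_partitions_mult_iff[OF assms(1)] by metis
qed

lemma finite_partitions_mult: "finite (partitions_mult m)"
proof (rule finite_subset)
  let ?extend = "\<lambda>f i. if i \<in> {1..m} then f i else (0::nat)"
  show "partitions_mult m \<subseteq> ?extend ` ({1..m} \<rightarrow>\<^sub>E {0..m})"
  proof
    fix a assume a: "a \<in> partitions_mult m"
    have "a i \<le> m" if "i \<in> {1..m}" for i
    proof -
      have "a i \<le> i * a i"
        using that by simp
      also have "\<dots> \<le> (\<Sum>i=1..m. i * a i)"
        using that by (intro member_le_sum) auto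
      finally show ?thesis
        using a by (simp add: partitions_mult_def)
    qed
    then have "restrict a {1..m} \<in> {1..m} \<rightarrow>\<^sub>E {0..m}"
      by simp
    moreover have "a = ?extend (restrict a {1..m})"
      using a by (auto simp: partitions_mult_def fun_eq_iff)
    ultimately show "a \<in> ?extend ` ({1..m} \<rightarrow>\<^sub>E {0..m})"
      by blast
  qed
qed (intro finite_imageI finite_PiE; simp)

lemma sum_subsets_with_weight_type:
  assumes Ob: "finite Ob" and a: "a \<in> partitions_mult m"
  shows "(\<Sum>T | T \<subseteq> Ob \<and> weight_type w T = a. (-1::int) ^ (m - card T)) =
    (-1) ^ (m - (\<Sum>i=1..m. a i)) * (\<Prod>i=1..m. int (card {c\<in>Ob. w c = i} choose a i))"
proof -
  have "card T = (\<Sum>i=1..m. a i)" if "T \<subseteq> Ob" "weight_type w T = a" for T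
  proof -
    have "finite T"
      using that(1) Ob finite_subset by blast
    moreover have "w ` T \<subseteq> {1..m}"
      using weight_type_in_partitions_mult_iff[OF \<open>finite T\<close>] a that(2) by blast
    ultimately have "card T = (\<Sum>i=1..m. weight_type w T i)"
      by (rule sum_eq_sum_weight_type(2)[OF _ finite_atLeastAtMost])
    with that(2) show ?thesis
      by simp
  qed
  then have "(\<Sum>T | T \<subseteq> Ob \<and> weight_type w T = a. (-1::int) ^ (m - card T)) =
      int (card {T. T \<subseteq> Ob \<and> weight_type w T = a}) * (-1) ^ (m - (\<Sum>i=1..m. a i))"
    by simp
  also have "card {T. T \<subseteq> Ob \<and> weight_type w T = a} = (\<Prod>i=1..m. card {c\<in>Ob. w c = i} choose a i)"
    using a by (intro card_subsets_with_weight_type Ob) (auto simp: partitions_mult_def)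
  finally show ?thesis
    by (simp add: mult.commute)
qed

lemma sum_subsets_by_weight_type:
  fixes w :: "'c \<Rightarrow> nat"
  assumes Ob: "finite Ob" and pos: "\<And>c. c \<in> Ob \<Longrightarrow> w c \<ge> 1"
  shows "(\<Sum>T | T \<subseteq> Ob \<and> sum w T = m. (-1::int) ^ (m - card T)) =
    (\<Sum>a\<in>partitions_mult m. (-1) ^ (m - (\<Sum>i=1..m. a i)) *
       (\<Prod>i=1..m. int (card {c\<in>Ob. w c = i} choose a i)))"
proof -
  let ?sign = "\<lambda>T. (-1::int) ^ (m - card T)"
  let ?P = "partitions_mult m"
  let ?typed = "{T. T \<subseteq> Ob \<and> weight_type w T \<in> ?P}"
  have "{T. T \<subseteq> Ob \<and> sum w T = m} = ?typed"
    using weight_type_in_partitions_mult_iff_sum pos finite_subset[OF _ Ob] by blast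
  then have "(\<Sum>T | T \<subseteq> Ob \<and> sum w T = m. ?sign T) = (\<Sum>T\<in>?typed. ?sign T)"
    by (simp only:)
  also have "\<dots> = (\<Sum>a\<in>?P. \<Sum>T\<in>{T\<in>?typed. weight_type w T = a}. ?sign T)"
    using Ob finite_partitions_mult by (intro sum.group[symmetric]) auto
  also have "\<dots> = (\<Sum>a\<in>?P. \<Sum>T | T \<subseteq> Ob \<and> weight_type w T = a. ?sign T)"
  proof (rule sum.cong[OF refl])
    fix a assume "a \<in> ?P"
    then have "{T\<in>?typed. weight_type w T = a} = {T. T \<subseteq> Ob \<and> weight_type w T = a}"
      by auto
    then show "(\<Sum>T\<in>{T\<in>?typed. weight_type w T = a}. ?sign T) =
        (\<Sum>T | T \<subseteq> Ob \<and> weight_type w T = a. ?sign T)"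
      by (simp only:)
  qed
  also have "\<dots> = (\<Sum>a\<in>?P. (-1) ^ (m - (\<Sum>i=1..m. a i)) *
       (\<Prod>i=1..m. int (card {c\<in>Ob. w c = i} choose a i)))"
    using sum_subsets_with_weight_type[OF Ob] by (rule sum.cong[OF refl])
  finally show ?thesis .
qed

lemma E_poly_eq_exterior_trace:
  assumes "\<sigma> permutes {1..n}"
  shows "E_poly (int m) (cycle_count n \<sigma>) = exterior_trace {1..n} \<sigma> m"
proof -
  have perm: "permutation \<sigma>"
    using assms permutation_permutes by blast
  have orbit_props: "finite c \<and> card c \<ge> 1" if c: "c \<in> orbits \<sigma> {1..n}" for c
  proof -
    obtain x where "c = orbit \<sigma> x"
      using c unfolding orbits_def by blast
    then have "x \<in> c" "finite c"
      using permutation_self_in_orbit[OF perm, of x] finite_orbit[OF permutation_self_in_orbit[OF perm]]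
      by simp_all
    then show ?thesis
      by (auto simp: Suc_le_eq card_gt_0_iff)
  qed
  have "cycle_count n \<sigma> = (\<lambda>i. card {c \<in> orbits \<sigma> {1..n}. card c = i})"
    unfolding cycle_count_def orbits_def by (intro ext arg_cong[where f = card]) blast
  moreover have "exterior_trace {1..n} \<sigma> m =
      (\<Sum>a\<in>partitions_mult m. (-1) ^ (m - (\<Sum>i=1..m. a i)) *
         (\<Prod>i=1..m. int (card {c \<in> orbits \<sigma> {1..n}. card c = i} choose a i)))"
    unfolding exterior_trace_eq_sum_orbit_sets[OF finite_atLeastAtMost assms]
    using orbit_props by (intro sum_subsets_by_weight_type) (auto simp: orbits_def)
  ultimately show ?thesis
    unfolding E_poly_def by simp
qed

section \<open>The signed second moment of exterior traces\<close>

definition set_stabilizer :: "'a set \<Rightarrow> 'a set \<Rightarrow> 'a set \<Rightarrow> ('a \<Rightarrow> 'a) set" where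
  "set_stabilizer S A B = {p. p permutes S \<and> p ` A = A \<and> p ` B = B}"

lemma exterior_trace_eq_sum_subsets:
  assumes "finite S"
  shows "exterior_trace S p k = (\<Sum>A | A \<subseteq> S \<and> card A = k. if p ` A = A then sign_on p A else 0)"
proof -
  have "(\<Sum>A | A \<subseteq> S \<and> card A = k. if p ` A = A then sign_on p A else 0) =
      (\<Sum>A \<in> {A \<in> {A. A \<subseteq> S \<and> card A = k}. p ` A = A}. sign_on p A)"
    using assms by (intro sum.inter_filter[symmetric]) simp
  moreover have "{A \<in> {A. A \<subseteq> S \<and> card A = k}. p ` A = A} = {A. A \<subseteq> S \<and> p ` A = A \<and> card A = k}"
    by blast
  ultimately show ?thesis
    unfolding exterior_trace_def by simp
qed

lemma sum_sign_mult_exterior_traces: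
  assumes "finite S"
  shows "(\<Sum>p | p permutes S. sign p * exterior_trace S p a * exterior_trace S p b) =
    (\<Sum>A | A \<subseteq> S \<and> card A = a. \<Sum>B | B \<subseteq> S \<and> card B = b.
       \<Sum>p\<in>set_stabilizer S A B. sign p * sign_on p A * sign_on p B)"
proof -
  let ?w = "\<lambda>p A B. if p ` A = A \<and> p ` B = B then sign p * sign_on p A * sign_on p B else 0"
  have "sign p * exterior_trace S p a * exterior_trace S p b =
      (\<Sum>A | A \<subseteq> S \<and> card A = a. \<Sum>B | B \<subseteq> S \<and> card B = b. ?w p A B)" for p
  proof -
    have "sign p * exterior_trace S p a * exterior_trace S p b =
        (\<Sum>A | A \<subseteq> S \<and> card A = a. sign p * (if p ` A = A then sign_on p A else 0)) *
        (\<Sum>B | B \<subseteq> S \<and> card B = b. if p ` B = B then sign_on p B else 0)"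
      unfolding exterior_trace_eq_sum_subsets[OF assms] by (simp add: sum_distrib_left)
    also have "\<dots> = (\<Sum>A | A \<subseteq> S \<and> card A = a. \<Sum>B | B \<subseteq> S \<and> card B = b. ?w p A B)"
      unfolding sum_product by (intro sum.cong refl) simp
    finally show ?thesis .
  qed
  then have "(\<Sum>p | p permutes S. sign p * exterior_trace S p a * exterior_trace S p b) =
      (\<Sum>p | p permutes S. \<Sum>A | A \<subseteq> S \<and> card A = a. \<Sum>B | B \<subseteq> S \<and> card B = b. ?w p A B)"
    by simp
  also have "\<dots> = (\<Sum>A | A \<subseteq> S \<and> card A = a. \<Sum>B | B \<subseteq> S \<and> card B = b.
      \<Sum>p | p permutes S. ?w p A B)"
    by (subst sum.swap) (simp add: sum.swap[of _ "{p. p permutes S}"])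
  also have "\<dots> = (\<Sum>A | A \<subseteq> S \<and> card A = a. \<Sum>B | B \<subseteq> S \<and> card B = b.
      \<Sum>p\<in>set_stabilizer S A B. sign p * sign_on p A * sign_on p B)"
  proof (rule sum.cong[OF refl], rule sum.cong[OF refl])
    fix A B
    have "set_stabilizer S A B = {p \<in> {p. p permutes S}. p ` A = A \<and> p ` B = B}"
      by (auto simp: set_stabilizer_def)
    then show "(\<Sum>p | p permutes S. ?w p A B) =
        (\<Sum>p\<in>set_stabilizer S A B. sign p * sign_on p A * sign_on p B)"
      using sum.inter_filter[OF finite_permutations[OF assms], symmetric] by (simp only:)
  qed
  finally show ?thesis .
qed

lemma image_regions_eq:
  assumes "inj p" "p ` S = S" "p ` A = A" "p ` B = B"
  shows "p ` (A \<inter> B) = A \<inter> B" "p ` (A - B) = A - B" "p ` (B - A) = B - A"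
    "p ` (S - (A \<union> B)) = S - (A \<union> B)"
  using assms by (simp_all add: image_Int image_set_diff image_Un)

(*
  A, B and S split into the p-invariant regions A \<inter> B, A - B, B - A and S - (A \<union> B); the signs
  on A - B and B - A occur twice and cancel.
*)
lemma sign_mult_sign_on_eq:
  assumes S: "finite S" and AB: "A \<subseteq> S" "B \<subseteq> S" and p: "p \<in> set_stabilizer S A B"
  shows "sign p * sign_on p A * sign_on p B = sign_on p (A \<inter> B) * sign_on p (S - (A \<union> B))"
proof -
  have perm: "p permutes S" and pA: "p ` A = A" and pB: "p ` B = B"
    using p by (auto simp: set_stabilizer_def)
  have inj: "inj p"
    using perm permutes_inj by blast
  have pS: "p ` S = S"
    using perm permutes_image by blast
  have Un: "sign_on p (X \<union> Y) = sign_on p X * sign_on p Y"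
    if "X \<subseteq> S" "Y \<subseteq> S" "X \<inter> Y = {}" "p ` X = X" "p ` Y = Y" for X Y
    using sign_on_Un[OF inj] that S finite_subset by metis
  let ?P = "A \<inter> B" and ?U = "A - B" and ?V = "B - A" and ?R = "S - (A \<union> B)"
  have regions: "p ` ?P = ?P" "p ` ?U = ?U" "p ` ?V = ?V" "p ` ?R = ?R"
    using image_regions_eq[OF inj pS pA pB] by simp_all
  have "sign_on p (?P \<union> ?U) = sign_on p ?P * sign_on p ?U"
    by (rule Un) (use AB regions in auto)
  moreover have "?P \<union> ?U = A"
    by blast
  ultimately have sA: "sign_on p A = sign_on p ?P * sign_on p ?U"
    by simp
  have "sign_on p (?P \<union> ?V) = sign_on p ?P * sign_on p ?V"
    by (rule Un) (use AB regions in auto)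
  moreover have "?P \<union> ?V = B"
    by blast
  ultimately have sB: "sign_on p B = sign_on p ?P * sign_on p ?V"
    by simp
  have "sign_on p ((?P \<union> ?U) \<union> (?V \<union> ?R)) = sign_on p (?P \<union> ?U) * sign_on p (?V \<union> ?R)"
    by (rule Un) (use AB regions in \<open>auto simp: image_Un\<close>)
  moreover have "(?P \<union> ?U) \<union> (?V \<union> ?R) = S"
    using AB by blast
  moreover have "sign_on p (?V \<union> ?R) = sign_on p ?V * sign_on p ?R"
    by (rule Un) (use AB regions in auto)
  ultimately have "sign p = sign_on p ?P * sign_on p ?U * (sign_on p ?V * sign_on p ?R)"
    using sA \<open>?P \<union> ?U = A\<close> perm by (simp add: sign_on_def)
  then show ?thesis
    using sA sB by (simp add: sign_on_def algebra_simps)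
qed

lemma sign_on_comp_transpose:
  assumes "inj p" "finite Q" "p ` Q = Q" "x \<in> Q" "y \<in> Q" "x \<noteq> y"
  shows "sign_on (p \<circ> transpose x y) Q = - sign_on p Q"
proof -
  have "perm_restrict (p \<circ> transpose x y) Q = perm_restrict p Q \<circ> transpose x y"
    using assms(4,5) by (auto simp: fun_eq_iff perm_restrict_def transpose_def)
  moreover have "permutation (perm_restrict p Q)"
    using perm_restrict_permutes[OF assms(1,3)] assms(2) permutation_permutes by blast
  ultimately show ?thesis
    using assms(6) by (simp add: sign_on_def sign_compose permutation_swap_id sign_swap_id)
qed

lemma sign_on_comp_transpose_outside:
  assumes "x \<notin> Q" "y \<notin> Q"
  shows "sign_on (p \<circ> transpose x y) Q = sign_on p Q"
proof -
  have "perm_restrict (p \<circ> transpose x y) Q = perm_restrict p Q"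
    using assms by (auto simp: fun_eq_iff perm_restrict_def transpose_def)
  then show ?thesis
    by (simp add: sign_on_def)
qed

lemma comp_transpose_in_set_stabilizer:
  assumes "p \<in> set_stabilizer S A B" "x \<in> S" "y \<in> S" "x \<in> A \<longleftrightarrow> y \<in> A" "x \<in> B \<longleftrightarrow> y \<in> B"
  shows "p \<circ> transpose x y \<in> set_stabilizer S A B"
proof -
  have "(p \<circ> transpose x y) ` A = A" "(p \<circ> transpose x y) ` B = B"
    using assms(1,4,5) by (simp_all only: image_comp[symmetric] transpose_image_eq set_stabilizer_def mem_Collect_eq)
  then show ?thesis
    using assms(1) permutes_compose[OF permutes_swap_id[OF assms(2,3)]]
    by (simp add: set_stabilizer_def)
qed

lemma sign_on_regions_comp_transpose:
  assumes AB: "A \<subseteq> S" "B \<subseteq> S" and p: "p \<in> set_stabilizer S A B"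
    and Q: "Q = A \<inter> B \<or> Q = S - (A \<union> B)" "finite Q" and xy: "x \<in> Q" "y \<in> Q" "x \<noteq> y"
  shows "sign_on (p \<circ> transpose x y) (A \<inter> B) * sign_on (p \<circ> transpose x y) (S - (A \<union> B)) =
    - (sign_on p (A \<inter> B) * sign_on p (S - (A \<union> B)))"
proof -
  have perm: "p permutes S" and pA: "p ` A = A" and pB: "p ` B = B"
    using p by (auto simp: set_stabilizer_def)
  have inj: "inj p"
    using perm permutes_inj by blast
  have "p ` Q = Q"
    using Q(1) image_regions_eq(1,4)[OF inj permutes_image[OF perm] pA pB] by (elim disjE) simp_all
  then have flip: "sign_on (p \<circ> transpose x y) Q = - sign_on p Q"
    using sign_on_comp_transpose[OF inj Q(2) _ xy] by blast
  from Q(1) show ?thesis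
  proof
    assume "Q = A \<inter> B"
    then show ?thesis
      using flip xy sign_on_comp_transpose_outside[of x "S - (A \<union> B)" y p] by simp
  next
    assume "Q = S - (A \<union> B)"
    then show ?thesis
      using flip xy sign_on_comp_transpose_outside[of x "A \<inter> B" y p] by simp
  qed
qed

lemma sum_sign_on_regions_eq_0:
  assumes S: "finite S" and AB: "A \<subseteq> S" "B \<subseteq> S"
    and Q: "Q = A \<inter> B \<or> Q = S - (A \<union> B)" "card Q \<ge> 2"
  shows "(\<Sum>p\<in>set_stabilizer S A B. sign_on p (A \<inter> B) * sign_on p (S - (A \<union> B))) = 0"
proof -
  have "finite Q"
    using Q(1) S AB finite_subset by blast
  then obtain x y where xy: "x \<in> Q" "y \<in> Q" "x \<noteq> y"
    using Q(2) card_le_Suc0_iff_eq[of Q] by fastforce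
  show ?thesis
  proof (rule sum_involution_eq_0[where h = "\<lambda>p. p \<circ> transpose x y"])
    fix p assume p: "p \<in> set_stabilizer S A B"
    show "p \<circ> transpose x y \<in> set_stabilizer S A B"
      using comp_transpose_in_set_stabilizer[OF p] xy Q(1) AB by auto
    show "p \<circ> transpose x y \<circ> transpose x y = p"
      by (simp add: comp_assoc)
    show "p \<circ> transpose x y \<noteq> p"
    proof
      assume "p \<circ> transpose x y = p"
      then have "p y = p x"
        by (metis comp_apply transpose_apply_first)
      moreover have "inj p"
        using p permutes_inj by (auto simp: set_stabilizer_def)
      ultimately show False
        using xy(3) by (simp add: inj_eq)
    qed
    show "sign_on (p \<circ> transpose x y) (A \<inter> B) * sign_on (p \<circ> transpose x y) (S - (A \<union> B)) +
        sign_on p (A \<inter> B) * sign_on p (S - (A \<union> B)) = 0"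
      using sign_on_regions_comp_transpose[OF AB p Q(1) \<open>finite Q\<close> xy] by simp
  qed
qed

lemma fixed_if_card_le_1:
  assumes "finite Q" "card Q \<le> 1" "p ` Q = Q" "z \<in> Q"
  shows "p z = z"
  using assms card_le_Suc0_iff_eq[OF assms(1)] by auto

lemma sign_on_card_le_1:
  assumes "finite Q" "card Q \<le> 1" "p ` Q = Q"
  shows "sign_on p Q = 1"
proof -
  have "p z = z" if "z \<in> Q" for z
    using fixed_if_card_le_1[OF assms that] .
  then have "perm_restrict p Q = id"
    by (auto simp: fun_eq_iff perm_restrict_def)
  then show ?thesis
    by (simp add: sign_on_def)
qed

lemma image_eq_if_permutes_disjoint:
  assumes "r permutes V" "U \<inter> V = {}"
  shows "r ` U = U"
proof -
  have "r x = id x" if "x \<in> U" for x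
    using that assms permutes_not_in by fastforce
  then show ?thesis
    using image_cong[OF refl, of U r id] by simp
qed

lemma image_eq_complement:
  assumes "inj p" "p ` (U \<union> V) = U \<union> V" "p ` U = U" "U \<inter> V = {}"
  shows "p ` V = V"
proof -
  have "p ` ((U \<union> V) - U) = (U \<union> V) - U"
    using assms(1-3) by (simp add: image_set_diff)
  moreover have "(U \<union> V) - U = V"
    using assms(4) by blast
  ultimately show ?thesis
    by simp
qed

lemma perm_restrict_split:
  assumes p: "p permutes U \<union> V" "p ` U = U" and "U \<inter> V = {}"
  shows "perm_restrict p U permutes U" "perm_restrict p V permutes V"
    "perm_restrict p U \<circ> perm_restrict p V = p"
proof -
  have inj: "inj p"
    using permutes_inj[OF p(1)] .
  have "p ` V = V"
    using image_eq_complement[OF inj permutes_image[OF p(1)] p(2) assms(3)] .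
  then show "perm_restrict p U permutes U" "perm_restrict p V permutes V"
    using perm_restrict_permutes[OF inj] p(2) by blast+
  then have "perm_restrict p U \<circ> perm_restrict p V = perm_restrict p (U \<union> V)"
    using perm_restrict_union assms(3) by blast
  then show "perm_restrict p U \<circ> perm_restrict p V = p"
    using p(1) by simp
qed

lemma perm_restrict_comp_disjoint:
  assumes q: "q permutes U" and r: "r permutes V" and "U \<inter> V = {}"
  shows "perm_restrict (q \<circ> r) U = q" "perm_restrict (q \<circ> r) V = r"
proof -
  have "perm_restrict (q \<circ> r) U z = q z" for z
  proof (cases "z \<in> U")
    case True
    then have "z \<notin> V"
      using assms(3) by blast
    then show ?thesis
      using True permutes_not_in[OF r] by (simp add: perm_restrict_def)
  qed (simp add: perm_restrict_def permutes_not_in[OF q])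
  then show "perm_restrict (q \<circ> r) U = q" ..
  have "perm_restrict (q \<circ> r) V z = r z" for z
    using assms(3) permutes_not_in[OF q, of "r z"] permutes_not_in[OF r, of z]
      permutes_in_image[OF r, of z]
    by (cases "z \<in> V") (auto simp: perm_restrict_def)
  then show "perm_restrict (q \<circ> r) V = r" ..
qed

lemma card_permutes_preserving:
  assumes "finite U" "finite V" "U \<inter> V = {}"
  shows "card {p. p permutes U \<union> V \<and> p ` U = U} = fact (card U) * fact (card V)"
proof -
  let ?P = "{p. p permutes U \<union> V \<and> p ` U = U}"
  have comp_in: "q \<circ> r \<in> ?P" if q: "q permutes U" and r: "r permutes V" for q r
  proof -
    have "(q \<circ> r) ` U = q ` (r ` U)"
      by (rule image_comp[symmetric])
    also have "\<dots> = U"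
      using image_eq_if_permutes_disjoint[OF r assms(3)] permutes_image[OF q] by simp
    finally show ?thesis
      using permutes_compose[OF permutes_subset[OF r] permutes_subset[OF q]] by simp
  qed
  have "bij_betw (\<lambda>p. (perm_restrict p U, perm_restrict p V)) ?P ({q. q permutes U} \<times> {r. r permutes V})"
  proof (rule bij_betw_byWitness[where f' = "\<lambda>(q, r). q \<circ> r"])
    show "\<forall>p\<in>?P. (\<lambda>(q, r). q \<circ> r) (perm_restrict p U, perm_restrict p V) = p"
      using perm_restrict_split(3)[OF _ _ assms(3)] by simp
    show "(\<lambda>p. (perm_restrict p U, perm_restrict p V)) ` ?P \<subseteq> {q. q permutes U} \<times> {r. r permutes V}"
      using perm_restrict_split(1,2)[OF _ _ assms(3)] by blast
    show "\<forall>qr\<in>{q. q permutes U} \<times> {r. r permutes V}.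
        (\<lambda>p. (perm_restrict p U, perm_restrict p V)) ((\<lambda>(q, r). q \<circ> r) qr) = qr"
      using perm_restrict_comp_disjoint[OF _ _ assms(3)] by fastforce
    show "(\<lambda>(q, r). q \<circ> r) ` ({q. q permutes U} \<times> {r. r permutes V}) \<subseteq> ?P"
      using comp_in by fastforce
  qed
  then have "card ?P = card ({q. q permutes U} \<times> {r. r permutes V})"
    by (rule bij_betw_same_card)
  then show ?thesis
    using assms by (simp add: card_cartesian_product card_permutations)
qed

lemma set_stabilizer_eq_permutes_preserving:
  assumes S: "finite S" and AB: "A \<subseteq> S" "B \<subseteq> S"
    and small: "card (A \<inter> B) \<le> 1" "card (S - (A \<union> B)) \<le> 1"
  shows "set_stabilizer S A B = {p. p permutes (A - B) \<union> (B - A) \<and> p ` (A - B) = A - B}"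
proof (intro equalityI subsetI)
  fix p assume "p \<in> set_stabilizer S A B"
  then have perm: "p permutes S" and pA: "p ` A = A" and pB: "p ` B = B"
    by (auto simp: set_stabilizer_def)
  note regions = image_regions_eq[OF permutes_inj[OF perm] permutes_image[OF perm] pA pB]
  have "p z = z" if "z \<in> S - ((A - B) \<union> (B - A))" for z
  proof -
    have "z \<in> A \<inter> B \<or> z \<in> S - (A \<union> B)"
      using that by blast
    then show ?thesis
      using fixed_if_card_le_1[OF _ small(1) regions(1)] fixed_if_card_le_1[OF _ small(2) regions(4)]
        S AB finite_subset by (metis Diff_subset inf.coboundedI1)
  qed
  then have "p permutes (A - B) \<union> (B - A)"
    by (rule permutes_superset[OF perm])
  then show "p \<in> {p. p permutes (A - B) \<union> (B - A) \<and> p ` (A - B) = A - B}"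
    using regions(2) by simp
next
  fix p assume "p \<in> {p. p permutes (A - B) \<union> (B - A) \<and> p ` (A - B) = A - B}"
  then have perm: "p permutes (A - B) \<union> (B - A)" and pU: "p ` (A - B) = A - B"
    by auto
  have pV: "p ` (B - A) = B - A"
    using image_eq_complement[OF permutes_inj[OF perm] permutes_image[OF perm] pU] by blast
  have pP: "p ` (A \<inter> B) = A \<inter> B"
    using permutes_not_in[OF perm] by (intro image_cong[where g = id, simplified]) auto
  have "A = (A \<inter> B) \<union> (A - B)" "B = (A \<inter> B) \<union> (B - A)"
    by blast+
  then have "p ` A = A" "p ` B = B"
    using pP pU pV by (metis image_Un)+
  moreover have "p permutes S"
    using permutes_subset[OF perm] AB by blast
  ultimately show "p \<in> set_stabilizer S A B"
    by (simp add: set_stabilizer_def)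
qed

lemma sum_sign_on_regions_small:
  assumes S: "finite S" and AB: "A \<subseteq> S" "B \<subseteq> S"
    and small: "card (A \<inter> B) \<le> 1" "card (S - (A \<union> B)) \<le> 1"
  shows "(\<Sum>p\<in>set_stabilizer S A B. sign_on p (A \<inter> B) * sign_on p (S - (A \<union> B))) =
    fact (card (A - B)) * fact (card (B - A))"
proof -
  have fin: "finite (A \<inter> B)" "finite (S - (A \<union> B))" "finite (A - B)" "finite (B - A)"
    using S AB by (auto intro: finite_subset)
  have "sign_on p (A \<inter> B) * sign_on p (S - (A \<union> B)) = 1" if "p \<in> set_stabilizer S A B" for p
  proof -
    have perm: "p permutes S" and "p ` A = A" "p ` B = B"
      using that by (auto simp: set_stabilizer_def)
    note regions = image_regions_eq[OF permutes_inj[OF perm] permutes_image[OF perm] this(2,3)]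
    show ?thesis
      using sign_on_card_le_1[OF fin(1) small(1) regions(1)] sign_on_card_le_1[OF fin(2) small(2) regions(4)]
      by simp
  qed
  then have "(\<Sum>p\<in>set_stabilizer S A B. sign_on p (A \<inter> B) * sign_on p (S - (A \<union> B))) =
      int (card (set_stabilizer S A B))"
    by simp
  also have "card (set_stabilizer S A B) = fact (card (A - B)) * fact (card (B - A))"
    unfolding set_stabilizer_eq_permutes_preserving[OF assms]
    using fin(3,4) by (intro card_permutes_preserving) auto
  finally show ?thesis
    by simp
qed

definition pair_weight :: "'a set \<Rightarrow> 'a set \<Rightarrow> 'a set \<Rightarrow> nat" where
  "pair_weight S A B = (if card (A \<inter> B) \<le> 1 \<and> card (S - (A \<union> B)) \<le> 1
     then fact (card (A - B)) * fact (card (B - A)) else 0)"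

lemma sum_sign_set_stabilizer:
  assumes "finite S" "A \<subseteq> S" "B \<subseteq> S"
  shows "(\<Sum>p\<in>set_stabilizer S A B. sign p * sign_on p A * sign_on p B) = int (pair_weight S A B)"
proof -
  have "(\<Sum>p\<in>set_stabilizer S A B. sign p * sign_on p A * sign_on p B) =
      (\<Sum>p\<in>set_stabilizer S A B. sign_on p (A \<inter> B) * sign_on p (S - (A \<union> B)))"
    using sign_mult_sign_on_eq[OF assms] by (rule sum.cong[OF refl])
  also have "\<dots> = int (pair_weight S A B)"
  proof (cases "card (A \<inter> B) \<le> 1 \<and> card (S - (A \<union> B)) \<le> 1")
    case True
    then show ?thesis
      using sum_sign_on_regions_small[OF assms] by (simp add: pair_weight_def)
  next
    case False
    then obtain Q where "Q = A \<inter> B \<or> Q = S - (A \<union> B)" "card Q \<ge> 2"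
      by force
    then show ?thesis
      using sum_sign_on_regions_eq_0[OF assms] False by (simp add: pair_weight_def)
  qed
  finally show ?thesis .
qed

lemma pair_weight_eq:
  assumes S: "finite S" and AB: "A \<subseteq> S" "B \<subseteq> S"
  shows "pair_weight S A B =
    (if card (A \<inter> B) \<le> 1 \<and> card S - (card A + card B - card (A \<inter> B)) \<le> 1
     then fact (card A - card (A \<inter> B)) * fact (card B - card (A \<inter> B)) else 0)"
proof -
  have fin: "finite A" "finite B"
    using AB S finite_subset by blast+
  have "card (A - B) = card A - card (A \<inter> B)"
    using card_Diff_subset_Int[of A B] fin by simp
  moreover have "card (B - A) = card B - card (A \<inter> B)"
    using card_Diff_subset_Int[of B A] fin by (simp add: Int_commute)
  moreover have "card (S - (A \<union> B)) = card S - (card A + card B - card (A \<inter> B))"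
    using card_Un_Int[OF fin] card_Diff_subset[of "A \<union> B" S] fin AB by simp
  ultimately show ?thesis
    unfolding pair_weight_def by simp
qed

section \<open>Counting the contributing pairs of subsets\<close>

lemma bij_betw_subsets_meeting:
  assumes S: "finite S" and A: "A \<subseteq> S" and "d \<le> b"
  shows "bij_betw (\<lambda>B. (A \<inter> B, B - A)) {B. B \<subseteq> S \<and> card B = b \<and> card (A \<inter> B) = d}
      ({C. C \<subseteq> A \<and> card C = d} \<times> {D. D \<subseteq> S - A \<and> card D = b - d})"
proof (rule bij_betw_byWitness[where f' = "\<lambda>(C, D). C \<union> D"])
  show "\<forall>B\<in>{B. B \<subseteq> S \<and> card B = b \<and> card (A \<inter> B) = d}. (\<lambda>(C, D). C \<union> D) (A \<inter> B, B - A) = B"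
    by auto
  show "\<forall>CD\<in>{C. C \<subseteq> A \<and> card C = d} \<times> {D. D \<subseteq> S - A \<and> card D = b - d}.
      (\<lambda>B. (A \<inter> B, B - A)) ((\<lambda>(C, D). C \<union> D) CD) = CD"
    by auto
  show "(\<lambda>B. (A \<inter> B, B - A)) ` {B. B \<subseteq> S \<and> card B = b \<and> card (A \<inter> B) = d} \<subseteq>
      {C. C \<subseteq> A \<and> card C = d} \<times> {D. D \<subseteq> S - A \<and> card D = b - d}"
  proof (rule image_subsetI)
    fix B assume "B \<in> {B. B \<subseteq> S \<and> card B = b \<and> card (A \<inter> B) = d}"
    then have B: "B \<subseteq> S" "card B = b" "card (A \<inter> B) = d"
      by auto
    have "finite B"
      using B(1) S finite_subset by blast
    then have "card (B - A) = b - d"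
      using B card_Diff_subset_Int[of B A] by (simp add: Int_commute)
    then show "(A \<inter> B, B - A) \<in> {C. C \<subseteq> A \<and> card C = d} \<times> {D. D \<subseteq> S - A \<and> card D = b - d}"
      using B by auto
  qed
  show "(\<lambda>(C, D). C \<union> D) ` ({C. C \<subseteq> A \<and> card C = d} \<times> {D. D \<subseteq> S - A \<and> card D = b - d}) \<subseteq>
      {B. B \<subseteq> S \<and> card B = b \<and> card (A \<inter> B) = d}"
  proof (rule image_subsetI)
    fix CD assume "CD \<in> {C. C \<subseteq> A \<and> card C = d} \<times> {D. D \<subseteq> S - A \<and> card D = b - d}"
    then obtain C D where CD: "CD = (C, D)" and C: "C \<subseteq> A" "card C = d"
      and D: "D \<subseteq> S - A" "card D = b - d"
      by blast
    have "finite C" "finite D" "C \<inter> D = {}"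
      using C(1) D(1) S A by (auto intro: finite_subset)
    then have "card (C \<union> D) = b"
      using C(2) D(2) \<open>d \<le> b\<close> by (simp add: card_Un_disjoint)
    moreover have "A \<inter> (C \<union> D) = C"
      using C(1) D(1) by blast
    ultimately show "(\<lambda>(C, D). C \<union> D) CD \<in> {B. B \<subseteq> S \<and> card B = b \<and> card (A \<inter> B) = d}"
      using CD C D A by auto
  qed
qed

lemma card_subsets_meeting:
  assumes S: "finite S" and A: "A \<subseteq> S" and "d \<le> b"
  shows "card {B. B \<subseteq> S \<and> card B = b \<and> card (A \<inter> B) = d} =
    (card A choose d) * ((card S - card A) choose (b - d))"
proof -
  have fin: "finite A" "finite (S - A)"
    using S A finite_subset by auto
  have "card {B. B \<subseteq> S \<and> card B = b \<and> card (A \<inter> B) = d} =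
      card ({C. C \<subseteq> A \<and> card C = d} \<times> {D. D \<subseteq> S - A \<and> card D = b - d})"
    by (rule bij_betw_same_card[OF bij_betw_subsets_meeting[OF assms]])
  also have "\<dots> = (card A choose d) * (card (S - A) choose (b - d))"
    using fin by (simp add: card_cartesian_product n_subsets)
  finally show ?thesis
    using card_Diff_subset[OF fin(1) A] by simp
qed

definition unit_square_mset :: "nat \<Rightarrow> nat \<Rightarrow> nat \<Rightarrow> nat \<Rightarrow> (nat \<times> nat) multiset" where
  "unit_square_mset w x y z = replicate_mset w (0, 0) + replicate_mset x (1, 0) + replicate_mset y (0, 1)
    + replicate_mset z (1, 1)"

lemma unit_square_mset_simps:
  "size (unit_square_mset w x y z) = w + x + y + z"
  "sum_mset (image_mset fst (unit_square_mset w x y z)) = x + z"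
  "sum_mset (image_mset snd (unit_square_mset w x y z)) = y + z"
  "count (unit_square_mset w x y z) (0, 0) = w"
  "count (unit_square_mset w x y z) (1, 1) = z"
  "set_mset (unit_square_mset w x y z) \<subseteq> {(0, 0), (1, 0), (0, 1), (1, 1)}"
  by (auto simp: unit_square_mset_def)

lemma unit_square_mset_counts:
  assumes "set_mset M \<subseteq> {(0, 0), (1, 0), (0, 1), (1, 1)}"
  shows "M = unit_square_mset (count M (0, 0)) (count M (1, 0)) (count M (0, 1)) (count M (1, 1))"
proof (rule multiset_eqI)
  fix v
  show "count M v = count (unit_square_mset (count M (0, 0)) (count M (1, 0)) (count M (0, 1)) (count M (1, 1))) v"
    using assms by (cases "v \<in> {(0, 0), (1, 0), (0, 1), (1, 1)}") (auto simp: unit_square_mset_def not_in_iff)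
qed

(* A multiset counted by qstar is determined by its number z of copies of (1,1). *)
lemma qstar_eq_card:
  "qstar n a b = card {z. z \<le> 1 \<and> z \<le> a \<and> z \<le> b \<and> a + b \<le> n + z \<and> n + z \<le> a + b + 1}"
proof -
  let ?Q = "{M :: (nat \<times> nat) multiset. set_mset M \<subseteq> {(0, 0), (1, 0), (0, 1), (1, 1)} \<and> size M = n \<and>
      count M (0, 0) \<le> 1 \<and> count M (1, 1) \<le> 1 \<and>
      sum_mset (image_mset fst M) = a \<and> sum_mset (image_mset snd M) = b}"
  let ?Z = "{z. z \<le> 1 \<and> z \<le> a \<and> z \<le> b \<and> a + b \<le> n + z \<and> n + z \<le> a + b + 1}"
  let ?f = "\<lambda>z. unit_square_mset (n + z - a - b) (a - z) (b - z) z"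
  have "?Q = ?f ` ?Z"
  proof (intro equalityI subsetI)
    fix M assume "M \<in> ?Q"
    then have M: "set_mset M \<subseteq> {(0, 0), (1, 0), (0, 1), (1, 1)}" "size M = n"
      "count M (0, 0) \<le> 1" "count M (1, 1) \<le> 1"
      "sum_mset (image_mset fst M) = a" "sum_mset (image_mset snd M) = b"
      by auto
    obtain w x y z where counts: "count M (0, 0) = w" "count M (1, 0) = x" "count M (0, 1) = y"
      "count M (1, 1) = z"
      by blast
    have M_eq: "M = unit_square_mset w x y z"
      using unit_square_mset_counts[OF M(1)] unfolding counts .
    have "w + x + y + z = n" "x + z = a" "y + z = b" "w \<le> 1" "z \<le> 1"
      using M(2-6) unfolding M_eq unit_square_mset_simps by simp_all
    then have "z \<in> ?Z" "M = ?f z"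
      unfolding M_eq by auto
    then show "M \<in> ?f ` ?Z"
      by blast
  next
    fix M assume "M \<in> ?f ` ?Z"
    then obtain z where "z \<in> ?Z" "M = ?f z"
      by blast
    then show "M \<in> ?Q"
      using unit_square_mset_simps by auto
  qed
  moreover have "inj_on ?f ?Z"
  proof (rule inj_onI)
    fix z z' assume "?f z = ?f z'"
    then have "count (?f z) (1, 1) = count (?f z') (1, 1)"
      by (rule arg_cong)
    then show "z = z'"
      by (simp only: unit_square_mset_simps(5))
  qed
  ultimately show ?thesis
    unfolding qstar_def by (simp add: card_image)
qed

lemma choose_mult_fact_eq:
  fixes n a b d :: nat
  assumes "d \<le> b"
  shows "(n choose a) * (a choose d) * ((n - a) choose (b - d)) *
      (if d \<le> 1 \<and> n - (a + b - d) \<le> 1 then fact (a - d) * fact (b - d) else 0) =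
    (if d \<le> 1 \<and> d \<le> a \<and> a + b \<le> n + d \<and> n + d \<le> a + b + 1 then fact n else 0)"
proof (cases "a \<le> n \<and> d \<le> a \<and> b - d \<le> n - a")
  case True
  then have le: "a \<le> n" "d \<le> a" "b - d \<le> n - a"
    by auto
  show ?thesis
  proof (cases "d \<le> 1 \<and> n - (a + b - d) \<le> 1")
    case small: True
    have "fact d = (1::nat)" "fact (n - a - (b - d)) = (1::nat)"
      using small assms le by (auto simp: le_Suc_eq)
    then have "(a choose d) * fact (a - d) = fact a" "((n - a) choose (b - d)) * fact (b - d) = fact (n - a)"
      using binomial_fact_lemma[OF le(2)] binomial_fact_lemma[OF le(3)] by (simp_all add: ac_simps)
    moreover have "(n choose a) * fact a * fact (n - a) = fact n"
      using binomial_fact_lemma[OF le(1)] by (simp add: ac_simps)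
    ultimately have "(n choose a) * (a choose d) * ((n - a) choose (b - d)) * (fact (a - d) * fact (b - d)) = fact n"
      by (metis mult.assoc mult.left_commute)
    then show ?thesis
      using small le assms by auto
  next
    case False
    then show ?thesis
      using le assms by auto
  qed
next
  case False
  then have "(n choose a) * (a choose d) * ((n - a) choose (b - d)) = 0"
    by auto
  moreover have "\<not> (d \<le> a \<and> a + b \<le> n + d)"
    using False assms by auto
  ultimately show ?thesis
    by auto
qed

lemma sum_pair_weight_subsets:
  assumes S: "finite S" and A: "A \<subseteq> S"
  shows "(\<Sum>B | B \<subseteq> S \<and> card B = b. pair_weight S A B) =
    (\<Sum>d\<le>b. (card A choose d) * ((card S - card A) choose (b - d)) *
       (if d \<le> 1 \<and> card S - (card A + b - d) \<le> 1 then fact (card A - d) * fact (b - d) else 0))"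
proof -
  define g where "g d = (if d \<le> 1 \<and> card S - (card A + b - d) \<le> 1
    then fact (card A - d) * fact (b - d) else (0::nat))" for d
  have "(\<Sum>B | B \<subseteq> S \<and> card B = b. pair_weight S A B) =
      (\<Sum>B | B \<subseteq> S \<and> card B = b. g (card (A \<inter> B)))"
    using pair_weight_eq[OF S A] by (intro sum.cong refl) (auto simp: g_def)
  also have "\<dots> = (\<Sum>d\<le>b. \<Sum>B \<in> {B \<in> {B. B \<subseteq> S \<and> card B = b}. card (A \<inter> B) = d}. g (card (A \<inter> B)))"
  proof (rule sum.group[symmetric])
    show "finite {B. B \<subseteq> S \<and> card B = b}"
      using S by simp
    show "(\<lambda>B. card (A \<inter> B)) ` {B. B \<subseteq> S \<and> card B = b} \<subseteq> {..b}"
      using S by (auto intro!: card_mono intro: finite_subset)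
  qed simp
  also have "\<dots> = (\<Sum>d\<le>b. card {B. B \<subseteq> S \<and> card B = b \<and> card (A \<inter> B) = d} * g d)"
  proof (rule sum.cong[OF refl])
    fix d
    have "{B \<in> {B. B \<subseteq> S \<and> card B = b}. card (A \<inter> B) = d} =
        {B. B \<subseteq> S \<and> card B = b \<and> card (A \<inter> B) = d}"
      by auto
    then show "(\<Sum>B \<in> {B \<in> {B. B \<subseteq> S \<and> card B = b}. card (A \<inter> B) = d}. g (card (A \<inter> B))) =
        card {B. B \<subseteq> S \<and> card B = b \<and> card (A \<inter> B) = d} * g d"
      by simp
  qed
  also have "\<dots> = (\<Sum>d\<le>b. (card A choose d) * ((card S - card A) choose (b - d)) * g d)"
    using card_subsets_meeting[OF S A] by simp
  finally show ?thesis
    unfolding g_def .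
qed

lemma sum_pair_weights_eq_qstar:
  assumes S: "finite S"
  shows "(\<Sum>A | A \<subseteq> S \<and> card A = a. \<Sum>B | B \<subseteq> S \<and> card B = b. pair_weight S A B) =
    fact (card S) * qstar (card S) a b"
proof -
  let ?n = "card S"
  let ?K = "\<Sum>d\<le>b. (a choose d) * ((?n - a) choose (b - d)) *
    (if d \<le> 1 \<and> ?n - (a + b - d) \<le> 1 then fact (a - d) * fact (b - d) else 0)"
  have "(\<Sum>A | A \<subseteq> S \<and> card A = a. \<Sum>B | B \<subseteq> S \<and> card B = b. pair_weight S A B) =
      (\<Sum>A | A \<subseteq> S \<and> card A = a. ?K)"
    using sum_pair_weight_subsets[OF S] by (intro sum.cong refl) auto
  also have "\<dots> = (?n choose a) * ?K"
    using S by (simp add: n_subsets)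
  also have "\<dots> = (\<Sum>d\<le>b. if d \<le> 1 \<and> d \<le> a \<and> a + b \<le> ?n + d \<and> ?n + d \<le> a + b + 1 then fact ?n else 0)"
    unfolding sum_distrib_left using choose_mult_fact_eq by (simp add: mult.assoc)
  also have "\<dots> = fact ?n * card {d. d \<le> 1 \<and> d \<le> a \<and> d \<le> b \<and> a + b \<le> ?n + d \<and> ?n + d \<le> a + b + 1}"
    by (simp add: sum.If_cases Int_def conj_commute conj_left_commute)
  finally show ?thesis
    by (simp add: qstar_eq_card)
qed

lemma sum_sign_mult_exterior_traces_eq_qstar:
  assumes "finite S"
  shows "(\<Sum>p | p permutes S. sign p * exterior_trace S p a * exterior_trace S p b) =
    int (fact (card S) * qstar (card S) a b)"
  unfolding sum_sign_mult_exterior_traces[OF assms] sum_pair_weights_eq_qstar[OF assms, symmetric]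
    of_nat_sum
  using sum_sign_set_stabilizer[OF assms] by (intro sum.cong refl) auto

lemma S_conj_eq_exterior_traces:
  assumes "\<sigma> permutes {1..n}"
  shows "S_conj k l (cycle_count n \<sigma>) =
    exterior_trace {1..n} \<sigma> k * exterior_trace {1..n} \<sigma> l -
    (if l > 0 then exterior_trace {1..n} \<sigma> (k + 1) * exterior_trace {1..n} \<sigma> (l - 1) else 0)"
proof -
  have "E_poly (int k + 1) (cycle_count n \<sigma>) = exterior_trace {1..n} \<sigma> (k + 1)"
    using E_poly_eq_exterior_trace[OF assms, of "k + 1"] by (simp add: add.commute)
  moreover have "E_poly (int l - 1) (cycle_count n \<sigma>) =
      (if l > 0 then exterior_trace {1..n} \<sigma> (l - 1) else 0)"
  proof (cases "l > 0")
    case True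
    then have "int l - 1 = int (l - 1)"
      by simp
    then show ?thesis
      using True E_poly_eq_exterior_trace[OF assms, of "l - 1"] by simp
  qed (simp add: E_poly_def)
  ultimately show ?thesis
    unfolding S_conj_def using E_poly_eq_exterior_trace[OF assms] by simp
qed

theorem corollary3p3:
  fixes k l n :: nat
  assumes "l \<le> k"
  shows "signed_moment n (S_conj k l) =
    (if l > 0 then real (qstar n k l) - real (qstar n (k + 1) (l - 1))
     else real (qstar n k l))"
proof -
  \<comment> \<open>The identity holds for all k and l; the hypothesis l \<le> k only makes (k, l)' a partition.\<close>
  let ?e = "exterior_trace {1..n}"
  let ?moment = "\<lambda>a b. \<Sum>\<sigma> | \<sigma> permutes {1..n}. sign \<sigma> * ?e \<sigma> a * ?e \<sigma> b"
  have "(\<Sum>\<sigma> | \<sigma> permutes {1..n}. sign \<sigma> * S_conj k l (cycle_count n \<sigma>)) =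
      ?moment k l - (if l > 0 then ?moment (k + 1) (l - 1) else 0)"
    using S_conj_eq_exterior_traces by (simp add: sum_subtractf right_diff_distrib mult.assoc)
  also have "\<dots> = int (fact n * qstar n k l) - (if l > 0 then int (fact n * qstar n (k + 1) (l - 1)) else 0)"
    using sum_sign_mult_exterior_traces_eq_qstar[of "{1..n}"] by simp
  finally have moment: "(\<Sum>\<sigma> | \<sigma> permutes {1..n}. sign \<sigma> * S_conj k l (cycle_count n \<sigma>)) =
      int (fact n * qstar n k l) - (if l > 0 then int (fact n * qstar n (k + 1) (l - 1)) else 0)" .
  have "signed_moment n (S_conj k l) =
      real_of_int (\<Sum>\<sigma> | \<sigma> permutes {1..n}. sign \<sigma> * S_conj k l (cycle_count n \<sigma>)) / fact n"
    unfolding signed_moment_def of_int_sum by simp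
  also have "\<dots> = (if l > 0 then real (qstar n k l) - real (qstar n (k + 1) (l - 1))
     else real (qstar n k l))"
    unfolding moment by (simp add: field_simps)
  finally show ?thesis .
qed

end
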